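(* Let $x_0, x_1, x_2, \dots \in \mathbb{R}^m$ be a sequence of sparse vectors with supports $\mathcal{N}_t := \operatorname{supp}(x_t)$, observed noise-free as $y_t := A_t x_t$ with $A_t \in \mathbb{R}^{n_t \times m}$. Let $s_t := |\mathcal{N}_t|$, $u_t := |\mathcal{N}_t \setminus \mathcal{N}_{t-1}|$ and $e_t := |\mathcal{N}_{t-1} \setminus \mathcal{N}_t|$. Run the following recursive procedure (dynamic Modified-CS with $\epsilon = 0$, $\alpha = 0$): at $t=0$, let $\hat{x}_0$ be a solution of $\min_b \|b\|_1$ subject to $y_0 = A_0 b$, and set $\hat{\mathcal{N}}_0 := \{i : (\hat{x}_0)_i \neq 0\}$; for each $t > 0$, set $\mathcal{T} := \hat{\mathcal{N}}_{t-1}$, let $\hat{x}_t$ be a solution of $\min_b \|b_{\mathcal{T}^c}\|_1$ subject to $y_t = A_t b$, and set $\hat{\mathcal{N}}_t := \{i : (\hat{x}_t)_i \neq 0\}$. If $\delta_{2 s_0}(A_0) \le 0.2$ and, for all $t > 0$, $\delta_{s_t + u_t + e_t}(A_t) \le 0.2$, then $\hat{x}_t = x_t$ (exact recovery, with the minimizer unique) for all $t \ge 0$.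
   Context: For a vector $v$ and index set $\mathcal{T} \subseteq \{1,\dots,m\}$, $v_{\mathcal{T}}$ is the subvector of entries indexed by $\mathcal{T}$, and $\mathcal{T}^c$ is the complement of $\mathcal{T}$ in $\{1,\dots,m\}$. The restricted isometry constant $\delta_s(A)$ of a matrix $A$ is the smallest real number $\delta$ such that $(1-\delta)\|b\|_2^2 \le \|Ab\|_2^2 \le (1+\delta)\|b\|_2^2$ for all vectors $b$ with at most $s$ nonzero entries. *)

theory Defs
  imports "HOL-Analysis.Analysis"
begin

text \<open>Vectors in R^m are modelled as real^'m (the finite index type 'm stands for
  {1..m}).  A matrix with k rows and m columns is modelled as a function
  M :: nat => 'm => real of which only the rows i < k are relevant.\<close>

definition supp :: "real ^ 'm \<Rightarrow> 'm set" where
  "supp b = {i. b $ i \<noteq> 0}"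

definition mat_vec :: "(nat \<Rightarrow> 'm::finite \<Rightarrow> real) \<Rightarrow> real ^ 'm \<Rightarrow> nat \<Rightarrow> real" where
  "mat_vec M b i = (\<Sum>j\<in>UNIV. M i j * b $ j)"

definition mat_vec_norm2 :: "nat \<Rightarrow> (nat \<Rightarrow> 'm::finite \<Rightarrow> real) \<Rightarrow> real ^ 'm \<Rightarrow> real" where
  "mat_vec_norm2 k M b = (\<Sum>i<k. (mat_vec M b i)\<^sup>2)"

definition ric :: "nat \<Rightarrow> (nat \<Rightarrow> 'm::finite \<Rightarrow> real) \<Rightarrow> nat \<Rightarrow> real" where
  "ric k M s = Inf {\<delta>. \<forall>b :: real ^ 'm. card (supp b) \<le> s \<longrightarrow>
       (1 - \<delta>) * (norm b)\<^sup>2 \<le> mat_vec_norm2 k M b \<and>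
       mat_vec_norm2 k M b \<le> (1 + \<delta>) * (norm b)\<^sup>2}"

definition feasible :: "nat \<Rightarrow> (nat \<Rightarrow> 'm::finite \<Rightarrow> real) \<Rightarrow> real ^ 'm \<Rightarrow> real ^ 'm \<Rightarrow> bool" where
  "feasible k M x b \<longleftrightarrow> (\<forall>i<k. mat_vec M b i = mat_vec M x i)"

definition l1_off :: "'m::finite set \<Rightarrow> real ^ 'm \<Rightarrow> real" where
  "l1_off T b = (\<Sum>i\<in>- T. \<bar>b $ i\<bar>)"

text \<open>b solves  min_b |b_{T^c}|_1  subject to  M x = M b.  (T = {} gives plain l1 minimisation.)\<close>
definition is_modcs_sol :: "nat \<Rightarrow> (nat \<Rightarrow> 'm::finite \<Rightarrow> real) \<Rightarrow> 'm set \<Rightarrow> real ^ 'm \<Rightarrow> real ^ 'm \<Rightarrow> bool" where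
  "is_modcs_sol k M T x b \<longleftrightarrow> feasible k M x b \<and>
     (\<forall>b'. feasible k M x b' \<longrightarrow> l1_off T b \<le> l1_off T b')"

end

theory Submission
  imports Defs
begin

text \<open>Every time step is an instance of one static fact: if \<open>T\<close> is known, \<open>D = supp x - T\<close>,
  \<open>|T| + 2|D| \<le> s\<close> and \<open>\<delta>\<^sub>s < 0.3\<close>, then \<open>x\<close> is the unique minimiser of \<open>\<parallel>b\<^bsub>T\<^sup>c\<^esub>\<parallel>\<^sub>1\<close>
  subject to \<open>A b = A x\<close>. This reduces to a null space property: a nonzero kernel vector \<open>h\<close>
  satisfies \<open>\<parallel>h\<^bsub>D\<^esub>\<parallel>\<^sub>1 < \<parallel>h\<^bsub>(T \<union> D)\<^sup>c\<^esub>\<parallel>\<^sub>1\<close>. Otherwise cut the complement of \<open>S = T \<union> D\<close> into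
  blocks of \<open>|D|\<close> entries of decreasing size (Candes' shelling); the RIP bounds the correlation of
  \<open>A h\<^bsub>S\<^esub>\<close> and of \<open>A\<close> applied to the first block with everything beyond it, and \<open>A h = 0\<close> then
  yields a positive definite quadratic inequality in \<open>\<parallel>h\<^bsub>S\<^esub>\<parallel>\<close> and the first block's norm, forcing
  \<open>h = 0\<close>. With \<open>T = supp x\<^bsub>t-1\<^esub>\<close> (the previous estimate, by induction) one has
  \<open>|T| + 2|D| = s\<^sub>t + u\<^sub>t + e\<^sub>t\<close>, and \<open>T = {}\<close> gives \<open>2 s\<^sub>0\<close> at \<open>t = 0\<close>.\<close>

definition vec_restrict :: "real ^ 'm \<Rightarrow> 'm set \<Rightarrow> real ^ 'm" where
  "vec_restrict h U = (\<chi> i. if i \<in> U then h $ i else 0)"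

definition mat_inner :: "nat \<Rightarrow> (nat \<Rightarrow> 'm::finite \<Rightarrow> real) \<Rightarrow> real ^ 'm \<Rightarrow> real ^ 'm \<Rightarrow> real" where
  "mat_inner k M u v = (\<Sum>i<k. mat_vec M u i * mat_vec M v i)"

definition satisfies_rip :: "nat \<Rightarrow> (nat \<Rightarrow> 'm::finite \<Rightarrow> real) \<Rightarrow> nat \<Rightarrow> real \<Rightarrow> bool" where
  "satisfies_rip k M s d \<longleftrightarrow> (\<forall>b :: real ^ 'm. card (supp b) \<le> s \<longrightarrow>
       (1 - d) * (norm b)\<^sup>2 \<le> mat_vec_norm2 k M b \<and> mat_vec_norm2 k M b \<le> (1 + d) * (norm b)\<^sup>2)"

lemma mat_vec_add: "mat_vec M (u + v) i = mat_vec M u i + mat_vec M v i"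
  by (simp add: mat_vec_def algebra_simps sum.distrib)

lemma mat_vec_diff: "mat_vec M (u - v) i = mat_vec M u i - mat_vec M v i"
  by (simp add: mat_vec_def algebra_simps sum_subtractf)

lemma mat_vec_scaleR: "mat_vec M (c *\<^sub>R u) i = c * mat_vec M u i"
  by (simp add: mat_vec_def algebra_simps sum_distrib_left)

lemma mat_vec_zero [simp]: "mat_vec M 0 i = 0"
  by (simp add: mat_vec_def)

lemma mat_inner_add_left: "mat_inner k M (u + v) w = mat_inner k M u w + mat_inner k M v w"
  by (simp add: mat_inner_def mat_vec_add algebra_simps sum.distrib)

lemma mat_inner_add_right: "mat_inner k M w (u + v) = mat_inner k M w u + mat_inner k M w v"
  by (simp add: mat_inner_def mat_vec_add algebra_simps sum.distrib)

lemma mat_inner_diff_left: "mat_inner k M (u - v) w = mat_inner k M u w - mat_inner k M v w"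
  by (simp add: mat_inner_def mat_vec_diff algebra_simps sum_subtractf)

lemma mat_inner_diff_right: "mat_inner k M w (u - v) = mat_inner k M w u - mat_inner k M w v"
  by (simp add: mat_inner_def mat_vec_diff algebra_simps sum_subtractf)

lemma mat_inner_scaleR_left: "mat_inner k M (c *\<^sub>R u) w = c * mat_inner k M u w"
  by (simp add: mat_inner_def mat_vec_scaleR algebra_simps sum_distrib_left)

lemma mat_inner_scaleR_right: "mat_inner k M w (c *\<^sub>R u) = c * mat_inner k M w u"
  by (simp add: mat_inner_def mat_vec_scaleR algebra_simps sum_distrib_left)

lemma mat_inner_commute: "mat_inner k M u v = mat_inner k M v u"
  by (simp add: mat_inner_def mult.commute)

lemma mat_inner_zero_left [simp]: "mat_inner k M 0 u = 0"
  and mat_inner_zero_right [simp]: "mat_inner k M u 0 = 0"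
  by (simp_all add: mat_inner_def)

lemma mat_vec_norm2_eq_mat_inner: "mat_vec_norm2 k M b = mat_inner k M b b"
  by (simp add: mat_vec_norm2_def mat_inner_def power2_eq_square)

lemma mat_inner_kernel_right:
  "\<forall>i<k. mat_vec M h i = 0 \<Longrightarrow> mat_inner k M v h = 0"
  by (simp add: mat_inner_def)

lemma norm_vec_restrict_sq: "(norm (vec_restrict h U))\<^sup>2 = (\<Sum>i\<in>U. (h $ i)\<^sup>2)"
proof -
  have "(norm (vec_restrict h U))\<^sup>2 = (\<Sum>i\<in>UNIV. (if i \<in> U then (h $ i)\<^sup>2 else 0))"
    unfolding power2_norm_eq_inner inner_vec_def vec_restrict_def
    by (intro sum.cong) (auto simp: power2_eq_square)
  also have "\<dots> = (\<Sum>i\<in>U. (h $ i)\<^sup>2)"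
    by (simp add: sum.If_cases)
  finally show ?thesis .
qed

lemma supp_vec_restrict: "supp (vec_restrict h U) \<subseteq> U"
  by (auto simp: supp_def vec_restrict_def)

lemma vec_restrict_empty [simp]: "vec_restrict h {} = 0"
  by (simp add: vec_restrict_def vec_eq_iff)

lemma vec_restrict_Un:
  "A \<inter> B = {} \<Longrightarrow> vec_restrict h (A \<union> B) = vec_restrict h A + vec_restrict h B"
  by (auto simp: vec_restrict_def vec_eq_iff)

lemma vec_restrict_eq_0_iff: "vec_restrict h U = 0 \<longleftrightarrow> (\<forall>i\<in>U. h $ i = 0)"
  by (auto simp: vec_restrict_def vec_eq_iff)

lemma card_supp_le_of_subset: "supp b \<subseteq> W \<Longrightarrow> card W \<le> s \<Longrightarrow> card (supp b) \<le> s"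
  by (meson card_mono finite order_trans)

lemma inner_eq_0_of_disjoint_supp:
  "supp w \<subseteq> W \<Longrightarrow> supp v \<subseteq> V \<Longrightarrow> W \<inter> V = {} \<Longrightarrow> inner w v = 0"
  unfolding inner_vec_def by (rule sum.neutral) (auto simp: supp_def)

lemma ric_eq_Inf: "ric k M s = Inf {d. satisfies_rip k M s d}"
  by (simp add: ric_def satisfies_rip_def)

lemma satisfies_rip_mono:
  assumes "satisfies_rip k M s d" and "d \<le> d'"
  shows "satisfies_rip k M s d'"
  unfolding satisfies_rip_def
proof (intro allI impI)
  fix b :: "real ^ 'a" assume "card (supp b) \<le> s"
  then have "(1 - d) * (norm b)\<^sup>2 \<le> mat_vec_norm2 k M b \<and> mat_vec_norm2 k M b \<le> (1 + d) * (norm b)\<^sup>2"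
    using assms(1) by (simp add: satisfies_rip_def)
  moreover have "(1 - d') * (norm b)\<^sup>2 \<le> (1 - d) * (norm b)\<^sup>2" "(1 + d) * (norm b)\<^sup>2 \<le> (1 + d') * (norm b)\<^sup>2"
    using assms(2) by (simp_all add: mult_right_mono)
  ultimately show "(1 - d') * (norm b)\<^sup>2 \<le> mat_vec_norm2 k M b \<and> mat_vec_norm2 k M b \<le> (1 + d') * (norm b)\<^sup>2"
    by linarith
qed

lemma mat_vec_norm2_le:
  fixes M :: "nat \<Rightarrow> 'm::finite \<Rightarrow> real"
  shows "mat_vec_norm2 k M b \<le> (\<Sum>i<k. (\<Sum>j\<in>UNIV. \<bar>M i j\<bar>)\<^sup>2) * (norm b)\<^sup>2"
proof -
  have row: "\<bar>mat_vec M b i\<bar> \<le> (\<Sum>j\<in>UNIV. \<bar>M i j\<bar>) * norm b" for i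
  proof -
    have "\<bar>mat_vec M b i\<bar> \<le> (\<Sum>j\<in>UNIV. \<bar>M i j\<bar> * \<bar>b $ j\<bar>)"
      unfolding mat_vec_def abs_mult[symmetric] by (rule sum_abs)
    also have "\<dots> \<le> (\<Sum>j\<in>UNIV. \<bar>M i j\<bar> * norm b)"
      by (intro sum_mono mult_left_mono) (simp_all add: component_le_norm_cart)
    finally show ?thesis by (simp add: sum_distrib_right)
  qed
  have "(mat_vec M b i)\<^sup>2 \<le> (\<Sum>j\<in>UNIV. \<bar>M i j\<bar>)\<^sup>2 * (norm b)\<^sup>2" for i
    unfolding power_mult_distrib[symmetric] abs_le_square_iff[symmetric]
    using row[of i] by simp
  then have "mat_vec_norm2 k M b \<le> (\<Sum>i<k. (\<Sum>j\<in>UNIV. \<bar>M i j\<bar>)\<^sup>2 * (norm b)\<^sup>2)"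
    unfolding mat_vec_norm2_def by (rule sum_mono)
  then show ?thesis by (simp add: sum_distrib_right)
qed

lemma satisfies_rip_exists: "\<exists>d. satisfies_rip k M s d"
proof
  define C where "C = (\<Sum>i<k. (\<Sum>j\<in>UNIV. \<bar>M i j\<bar>)\<^sup>2)"
  show "satisfies_rip k M s (1 + C)"
    unfolding satisfies_rip_def
  proof (intro allI impI conjI)
    fix b :: "real ^ 'a"
    have C: "0 \<le> C" by (simp add: C_def sum_nonneg)
    have "(1 - (1 + C)) * (norm b)\<^sup>2 = - (C * (norm b)\<^sup>2)" by (simp add: algebra_simps)
    also have "\<dots> \<le> 0" using C by simp
    also have "0 \<le> mat_vec_norm2 k M b" by (simp add: mat_vec_norm2_def sum_nonneg)
    finally show "(1 - (1 + C)) * (norm b)\<^sup>2 \<le> mat_vec_norm2 k M b" .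
    have "mat_vec_norm2 k M b \<le> C * (norm b)\<^sup>2" unfolding C_def by (rule mat_vec_norm2_le)
    also have "\<dots> \<le> (1 + (1 + C)) * (norm b)\<^sup>2" by (rule mult_right_mono) simp_all
    finally show "mat_vec_norm2 k M b \<le> (1 + (1 + C)) * (norm b)\<^sup>2" .
  qed
qed

lemma satisfies_rip_of_ric_less:
  assumes "ric k M s < d"
  shows "satisfies_rip k M s d"
proof -
  have "{d. satisfies_rip k M s d} \<noteq> {}" using satisfies_rip_exists by blast
  moreover have "Inf {d. satisfies_rip k M s d} < d" using assms by (simp add: ric_eq_Inf)
  ultimately have "\<exists>d'\<in>{d. satisfies_rip k M s d}. d' < d" by (rule cInf_lessD)
  then obtain d' where "satisfies_rip k M s d'" "d' < d" by blast
  then show ?thesis using satisfies_rip_mono by fastforce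
qed

lemma mat_inner_unit_disjoint_le:
  fixes w v :: "real ^ 'm::finite"
  assumes rip: "satisfies_rip k M s d"
    and unit: "norm w = 1" "norm v = 1"
    and supp: "supp w \<subseteq> W" "supp v \<subseteq> V" "W \<inter> V = {}" and card: "card W + card V \<le> s"
  shows "\<bar>mat_inner k M w v\<bar> \<le> d"
proof -
  have "inner w v = 0" using supp by (rule inner_eq_0_of_disjoint_supp)
  moreover have "inner w w = 1" "inner v v = 1" using unit by (simp_all add: dot_square_norm)
  ultimately have norms: "(norm (w + v))\<^sup>2 = 2" "(norm (w - v))\<^sup>2 = 2"
    by (simp_all add: power2_norm_eq_inner algebra_simps inner_commute)
  have "card (W \<union> V) \<le> s" using card_Un_le[of W V] card by linarith
  moreover have "supp (w + v) \<subseteq> W \<union> V" "supp (w - v) \<subseteq> W \<union> V"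
    using supp by (force simp: supp_def)+
  ultimately have sparse: "card (supp (w + v)) \<le> s" "card (supp (w - v)) \<le> s"
    by (simp_all add: card_supp_le_of_subset)
  have rip_at: "(1 - d) * (norm b)\<^sup>2 \<le> mat_inner k M b b \<and> mat_inner k M b b \<le> (1 + d) * (norm b)\<^sup>2"
    if "card (supp b) \<le> s" for b
    using rip that unfolding satisfies_rip_def mat_vec_norm2_eq_mat_inner by blast
  note rip_at[OF sparse(1), unfolded norms(1)] rip_at[OF sparse(2), unfolded norms(2)]
  moreover have
    "mat_inner k M (w + v) (w + v) = mat_inner k M w w + 2 * mat_inner k M w v + mat_inner k M v v"
    "mat_inner k M (w - v) (w - v) = mat_inner k M w w - 2 * mat_inner k M w v + mat_inner k M v v"
    by (simp_all add: mat_inner_add_left mat_inner_add_right mat_inner_diff_left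
        mat_inner_diff_right mat_inner_commute[of k M v w])
  ultimately show ?thesis unfolding abs_le_iff by (auto simp: algebra_simps)
qed

lemma mat_inner_disjoint_le:
  fixes w v :: "real ^ 'm::finite"
  assumes rip: "satisfies_rip k M s d"
    and supp: "supp w \<subseteq> W" "supp v \<subseteq> V" "W \<inter> V = {}" and card: "card W + card V \<le> s"
  shows "\<bar>mat_inner k M w v\<bar> \<le> d * norm w * norm v"
proof (cases "w = 0 \<or> v = 0")
  case True
  then show ?thesis by auto
next
  case False
  define w' where "w' = (1 / norm w) *\<^sub>R w"
  define v' where "v' = (1 / norm v) *\<^sub>R v"
  have "supp w' \<subseteq> W" "supp v' \<subseteq> V"
    using supp by (auto simp: supp_def w'_def v'_def)
  moreover have "norm w' = 1" "norm v' = 1" using False by (simp_all add: w'_def v'_def)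
  ultimately have "\<bar>mat_inner k M w' v'\<bar> \<le> d"
    using mat_inner_unit_disjoint_le[OF rip] supp(3) card by blast
  moreover have "mat_inner k M w v = norm w * norm v * mat_inner k M w' v'"
    using False by (simp add: w'_def v'_def mat_inner_scaleR_left mat_inner_scaleR_right)
  moreover have "norm w * norm v * \<bar>mat_inner k M w' v'\<bar> \<le> norm w * norm v * d"
    using calculation(1) by (simp add: mult_left_mono)
  ultimately show ?thesis by (simp add: abs_mult mult.commute mult.left_commute)
qed

lemma exists_top_subset:
  fixes f :: "'a \<Rightarrow> real"
  assumes "finite R" and "n \<le> card R"
  shows "\<exists>B\<subseteq>R. card B = n \<and> (\<forall>i\<in>B. \<forall>j\<in>R - B. f j \<le> f i)"
  using assms(2)
proof (induction n)
  case 0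
  show ?case by (intro exI[of _ "{}"]) auto
next
  case (Suc n)
  then obtain B where B: "B \<subseteq> R" "card B = n" "\<forall>i\<in>B. \<forall>j\<in>R - B. f j \<le> f i" by auto
  have fin: "finite (R - B)" using assms(1) by simp
  have "R - B \<noteq> {}"
  proof
    assume "R - B = {}"
    then have "card R \<le> card B" using B(1) assms(1) by (simp add: card_mono finite_subset)
    then show False using Suc.prems B(2) by simp
  qed
  then have "Max (f ` (R - B)) \<in> f ` (R - B)" using fin by simp
  then obtain j0 where j0: "j0 \<in> R - B" "f j0 = Max (f ` (R - B))" by auto
  then have "\<forall>j\<in>R - B. f j \<le> f j0" using fin by simp
  moreover have "finite B" using B(1) assms(1) finite_subset by blast
  ultimately show ?case
    using B j0(1) by (intro exI[of _ "insert j0 B"]) auto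
qed

lemma le_sum_div_card:
  fixes f :: "'a \<Rightarrow> real"
  assumes "finite B" "B \<noteq> {}" "\<forall>i\<in>B. c \<le> f i"
  shows "c \<le> sum f B / card B"
proof -
  have "card B * c = (\<Sum>i\<in>B. c)" by simp
  also have "\<dots> \<le> sum f B" using assms(3) by (intro sum_mono) blast
  finally have "card B * c \<le> sum f B" .
  moreover have "0 < real (card B)" using assms(1,2) by (simp add: card_gt_0_iff)
  ultimately show ?thesis by (simp add: pos_le_divide_eq mult.commute)
qed

lemma norm_vec_restrict_le:
  assumes "card U \<le> u" "\<forall>i\<in>U. \<bar>h $ i\<bar> \<le> \<alpha>" "0 \<le> \<alpha>"
  shows "norm (vec_restrict h U) \<le> sqrt (real u) * \<alpha>"
proof (rule power2_le_imp_le)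
  have "(norm (vec_restrict h U))\<^sup>2 = (\<Sum>i\<in>U. (h $ i)\<^sup>2)" by (rule norm_vec_restrict_sq)
  also have "\<dots> \<le> real (card U) * \<alpha>\<^sup>2"
    using assms(2,3) by (intro sum_bounded_above) (simp add: abs_le_square_iff[symmetric])
  also have "\<dots> \<le> real u * \<alpha>\<^sup>2" using assms(1) by (intro mult_right_mono) auto
  finally show "(norm (vec_restrict h U))\<^sup>2 \<le> (sqrt (real u) * \<alpha>)\<^sup>2"
    by (simp add: power_mult_distrib)
  show "0 \<le> sqrt (real u) * \<alpha>" using assms(3) by simp
qed

lemma mat_inner_block_le:
  assumes rip: "satisfies_rip k M s d" and "0 \<le> d"
    and "supp w \<subseteq> W" "W \<inter> B = {}" "card W + u \<le> s"
    and "card B \<le> u" "\<forall>i\<in>B. \<bar>h $ i\<bar> \<le> \<alpha>" "0 \<le> \<alpha>"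
  shows "\<bar>mat_inner k M w (vec_restrict h B)\<bar> \<le> d * norm w * (sqrt (real u) * \<alpha>)"
proof -
  have "\<bar>mat_inner k M w (vec_restrict h B)\<bar> \<le> d * norm w * norm (vec_restrict h B)"
    using assms by (intro mat_inner_disjoint_le[OF rip _ supp_vec_restrict]) auto
  also have "\<dots> \<le> d * norm w * (sqrt (real u) * \<alpha>)"
    using assms by (intro mult_left_mono norm_vec_restrict_le) auto
  finally show ?thesis .
qed

lemma real_sqrt_mult_divide:
  assumes "0 \<le> x"
  shows "sqrt x * (a / x) = a / sqrt x"
proof (cases "x = 0")
  case False
  then have "0 < sqrt x" using assms by simp
  moreover have "sqrt x * sqrt x = x" using assms by simp
  ultimately show ?thesis
    by (metis nonzero_mult_divide_mult_cancel_left order_less_irrefl times_divide_eq_right)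
qed simp

text \<open>Shelling: split off the \<open>u\<close> largest entries of \<open>R\<close>; every remaining entry is at most
  their mean, so the next block has norm at most their \<open>\<ell>\<^sub>1\<close> norm divided by \<open>\<surd>u\<close>.\<close>
lemma mat_inner_tail_le:
  fixes h w :: "real ^ 'm::finite"
  assumes rip: "satisfies_rip k M s d" and d: "0 \<le> d" and u: "0 < u"
    and w: "supp w \<subseteq> W" "card W + u \<le> s"
  shows "W \<inter> R = {} \<Longrightarrow> 0 \<le> \<alpha> \<Longrightarrow> \<forall>i\<in>R. \<bar>h $ i\<bar> \<le> \<alpha> \<Longrightarrow>
    \<bar>mat_inner k M w (vec_restrict h R)\<bar>
      \<le> d * norm w * (sqrt (real u) * \<alpha> + (\<Sum>i\<in>R. \<bar>h $ i\<bar>) / sqrt (real u))"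
proof (induction "card R" arbitrary: R \<alpha> rule: less_induct)
  case less
  have block: "\<bar>mat_inner k M w (vec_restrict h B)\<bar> \<le> d * norm w * (sqrt (real u) * \<beta>)"
    if "B \<subseteq> R" "card B \<le> u" "\<forall>i\<in>B. \<bar>h $ i\<bar> \<le> \<beta>" "0 \<le> \<beta>" for B \<beta>
    using that less.prems(1) by (intro mat_inner_block_le[OF rip d w(1) _ w(2)]) auto
  show ?case
  proof (cases "card R \<le> u")
    case True
    have "\<bar>mat_inner k M w (vec_restrict h R)\<bar> \<le> d * norm w * (sqrt (real u) * \<alpha>)"
      using True less.prems by (intro block) auto
    also have "\<dots> \<le> d * norm w * (sqrt (real u) * \<alpha> + (\<Sum>i\<in>R. \<bar>h $ i\<bar>) / sqrt (real u))"
      using d by (intro mult_left_mono) (auto simp: sum_nonneg)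
    finally show ?thesis .
  next
    case False
    then obtain B where B: "B \<subseteq> R" "card B = u" "\<forall>i\<in>B. \<forall>j\<in>R - B. \<bar>h $ j\<bar> \<le> \<bar>h $ i\<bar>"
      using exists_top_subset[of R u "\<lambda>i. \<bar>h $ i\<bar>"] by auto
    define \<alpha>' where "\<alpha>' = (\<Sum>i\<in>B. \<bar>h $ i\<bar>) / real u"
    have "B \<noteq> {}" using B(2) u by auto
    then have \<alpha>': "\<forall>j\<in>R - B. \<bar>h $ j\<bar> \<le> \<alpha>'" "0 \<le> \<alpha>'"
      using B by (auto simp: \<alpha>'_def sum_nonneg intro!: le_sum_div_card)
    have "card (R - B) < card R" using B(1,2) False u by (simp add: card_Diff_subset finite_subset)
    then have tail: "\<bar>mat_inner k M w (vec_restrict h (R - B))\<bar>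
        \<le> d * norm w * (sqrt (real u) * \<alpha>' + (\<Sum>i\<in>R - B. \<bar>h $ i\<bar>) / sqrt (real u))"
      using less.hyps less.prems(1) \<alpha>' by auto
    have head: "\<bar>mat_inner k M w (vec_restrict h B)\<bar> \<le> d * norm w * (sqrt (real u) * \<alpha>)"
      using B less.prems by (intro block) auto
    have "vec_restrict h R = vec_restrict h B + vec_restrict h (R - B)"
      using B(1) vec_restrict_Un[of B "R - B" h] by (simp add: Un_absorb1)
    then have "\<bar>mat_inner k M w (vec_restrict h R)\<bar>
        \<le> \<bar>mat_inner k M w (vec_restrict h B)\<bar> + \<bar>mat_inner k M w (vec_restrict h (R - B))\<bar>"
      by (simp add: mat_inner_add_right abs_triangle_ineq)
    also have "\<dots> \<le> d * norm w * (sqrt (real u) * \<alpha>)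
        + d * norm w * (sqrt (real u) * \<alpha>' + (\<Sum>i\<in>R - B. \<bar>h $ i\<bar>) / sqrt (real u))"
      using head tail by linarith
    also have "\<dots> = d * norm w * (sqrt (real u) * \<alpha> + (\<Sum>i\<in>R. \<bar>h $ i\<bar>) / sqrt (real u))"
      using sum.subset_diff[OF B(1) finite, of "\<lambda>i. \<bar>h $ i\<bar>"]
      unfolding \<alpha>'_def real_sqrt_mult_divide[OF of_nat_0_le_iff]
      by (simp add: algebra_simps add_divide_distrib)
    finally show ?thesis .
  qed
qed

lemma mat_inner_tail_after_top_le:
  fixes h w :: "real ^ 'm::finite"
  assumes rip: "satisfies_rip k M s d" and d: "0 \<le> d" and u: "0 < u"
    and w: "supp w \<subseteq> W" "card W + u \<le> s" "W \<inter> (C - B) = {}"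
    and top: "B \<subseteq> C" "card B = min u (card C)" "\<forall>i\<in>B. \<forall>j\<in>C - B. \<bar>h $ j\<bar> \<le> \<bar>h $ i\<bar>"
  shows "\<bar>mat_inner k M w (vec_restrict h (C - B))\<bar> \<le> d * norm w * ((\<Sum>i\<in>C. \<bar>h $ i\<bar>) / sqrt (real u))"
proof (cases "C - B = {}")
  case True
  show ?thesis unfolding True using d by (simp add: sum_nonneg)
next
  case False
  then have "card B \<noteq> card C" using top(1) by (metis Diff_eq_empty_iff card_subset_eq finite)
  then have cB: "card B = u" using top(2) by linarith
  define \<alpha> where "\<alpha> = (\<Sum>i\<in>B. \<bar>h $ i\<bar>) / real u"
  have "B \<noteq> {}" using cB u by auto
  then have \<alpha>: "\<forall>j\<in>C - B. \<bar>h $ j\<bar> \<le> \<alpha>" "0 \<le> \<alpha>"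
    using top cB by (auto simp: \<alpha>_def sum_nonneg intro!: le_sum_div_card)
  have "\<bar>mat_inner k M w (vec_restrict h (C - B))\<bar>
      \<le> d * norm w * (sqrt (real u) * \<alpha> + (\<Sum>i\<in>C - B. \<bar>h $ i\<bar>) / sqrt (real u))"
    using mat_inner_tail_le[OF rip d u w(1,2) w(3) \<alpha>(2,1)] .
  also have "sqrt (real u) * \<alpha> + (\<Sum>i\<in>C - B. \<bar>h $ i\<bar>) / sqrt (real u) = (\<Sum>i\<in>C. \<bar>h $ i\<bar>) / sqrt (real u)"
    using sum.subset_diff[OF top(1) finite, of "\<lambda>i. \<bar>h $ i\<bar>"]
    unfolding \<alpha>_def real_sqrt_mult_divide[OF of_nat_0_le_iff]
    by (simp add: add_divide_distrib)
  finally show ?thesis .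
qed

lemma quadratic_bound_eq_0:
  fixes a b :: real
  assumes "4 * a\<^sup>2 + 7 * b\<^sup>2 \<le> 3 * (a * b)"
  shows "a = 0"
proof -
  have "4 * (a - 3/8 * b)\<^sup>2 + 103/16 * b\<^sup>2 = 4 * a\<^sup>2 + 7 * b\<^sup>2 - 3 * (a * b)"
    by (simp add: power2_eq_square algebra_simps)
  moreover have "0 \<le> (a - 3/8 * b)\<^sup>2" "0 \<le> b\<^sup>2" by simp_all
  ultimately have "b\<^sup>2 = 0" "(a - 3/8 * b)\<^sup>2 = 0" using assms by linarith+
  then show ?thesis by simp
qed

lemma sum_abs_le_sqrt_card_mult_norm:
  "(\<Sum>i\<in>U. \<bar>h $ i\<bar>) \<le> sqrt (card U) * norm (vec_restrict h U)"
proof -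
  have "(\<Sum>i\<in>U. \<bar>h $ i\<bar> * \<bar>1\<bar>) \<le> L2_set (\<lambda>i. h $ i) U * L2_set (\<lambda>i. 1) U"
    by (rule L2_set_mult_ineq)
  moreover have "L2_set (\<lambda>i. h $ i) U = norm (vec_restrict h U)"
    unfolding L2_set_def norm_vec_restrict_sq[symmetric] by simp
  ultimately show ?thesis by (simp add: L2_set_constant mult.commute)
qed

lemma norm_vec_restrict_mono:
  assumes "U \<subseteq> V"
  shows "norm (vec_restrict h U) \<le> norm (vec_restrict h V)"
proof (rule power2_le_imp_le)
  show "(norm (vec_restrict h U))\<^sup>2 \<le> (norm (vec_restrict h V))\<^sup>2"
    unfolding norm_vec_restrict_sq using assms by (intro sum_mono2) auto
qed simp

lemma kernel_sparse_eq_0: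
  assumes "satisfies_rip k M s d" "d < 1" "\<forall>i<k. mat_vec M h i = 0" "card (supp h) \<le> s"
  shows "h = 0"
proof -
  have "(1 - d) * (norm h)\<^sup>2 \<le> mat_vec_norm2 k M h"
    using assms(1,4) unfolding satisfies_rip_def by blast
  also have "mat_vec_norm2 k M h = 0" using assms(3) by (simp add: mat_vec_norm2_def)
  finally show ?thesis using assms(2) by (simp add: mult_le_0_iff)
qed

lemma kernel_vec_restrict_eq_0:
  fixes h :: "real ^ 'm::finite"
  assumes rip: "satisfies_rip k M s (3/10)" and ker: "\<forall>i<k. mat_vec M h i = 0"
    and u: "0 < u" "u \<le> card S" and card: "card S + u \<le> s"
    and cone: "(\<Sum>i\<in>-S. \<bar>h $ i\<bar>) \<le> sqrt (real u) * norm (vec_restrict h S)"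
  shows "vec_restrict h S = 0"
proof -
  define e where "e = (\<Sum>i\<in>-S. \<bar>h $ i\<bar>) / sqrt (real u)"
  obtain B where B: "B \<subseteq> -S" "card B = min u (card (-S))"
      "\<forall>i\<in>B. \<forall>j\<in>-S - B. \<bar>h $ j\<bar> \<le> \<bar>h $ i\<bar>"
    using exists_top_subset[of "-S" "min u (card (-S))" "\<lambda>i. \<bar>h $ i\<bar>"] by auto
  define hS hB hR where "hS = vec_restrict h S" and "hB = vec_restrict h B"
    and "hR = vec_restrict h (-S - B)"
  have tail: "\<bar>mat_inner k M w hR\<bar> \<le> 3/10 * (norm w * e)"
    if "supp w \<subseteq> W" "card W + u \<le> s" "W \<inter> (-S - B) = {}" for w W
    using mat_inner_tail_after_top_le[OF rip _ u(1) that B] by (simp add: hR_def e_def mult.assoc)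
  have "\<bar>mat_inner k M hS hR\<bar> \<le> 3/10 * (norm hS * e)"
    using card by (intro tail[of _ S]) (auto simp: hS_def supp_vec_restrict)
  moreover have "\<bar>mat_inner k M hB hR\<bar> \<le> 3/10 * (norm hB * e)"
    using card u(2) B(2) by (intro tail[of _ B]) (auto simp: hB_def supp_vec_restrict)
  moreover have "mat_inner k M (hS + hB) (hS + hB) = - (mat_inner k M hS hR + mat_inner k M hB hR)"
  proof -
    have "h = (hS + hB) + hR"
      using B(1) by (auto simp: vec_eq_iff hS_def hB_def hR_def vec_restrict_def)
    then have "0 = mat_inner k M (hS + hB) ((hS + hB) + hR)"
      using mat_inner_kernel_right[OF ker] by metis
    then show ?thesis by (simp add: mat_inner_add_left mat_inner_add_right)
  qed
  moreover have "7/10 * (norm (hS + hB))\<^sup>2 \<le> mat_inner k M (hS + hB) (hS + hB)"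
  proof -
    have "supp (hS + hB) \<subseteq> S \<union> B" by (auto simp: supp_def hS_def hB_def vec_restrict_def)
    moreover have "card (S \<union> B) \<le> s" using card_Un_le[of S B] card B(2) by linarith
    ultimately have "card (supp (hS + hB)) \<le> s" by (rule card_supp_le_of_subset)
    then show ?thesis using rip by (simp add: satisfies_rip_def mat_vec_norm2_eq_mat_inner)
  qed
  moreover have "(norm (hS + hB))\<^sup>2 = (norm hS)\<^sup>2 + (norm hB)\<^sup>2"
  proof -
    have "inner hS hB = 0"
      using B(1) unfolding hS_def hB_def
      by (intro inner_eq_0_of_disjoint_supp[OF supp_vec_restrict supp_vec_restrict]) auto
    then show ?thesis by (simp add: power2_norm_eq_inner inner_add_left inner_add_right inner_commute)
  qed
  moreover have "e \<le> norm hS" using cone u(1) by (simp add: e_def hS_def divide_le_eq mult.commute)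
  then have "norm hS * e \<le> (norm hS)\<^sup>2" "norm hB * e \<le> norm hS * norm hB"
    using mult_left_mono[of e "norm hS" "norm hS"] mult_left_mono[of e "norm hS" "norm hB"]
    by (simp_all add: power2_eq_square mult.commute)
  ultimately have "4 * (norm hS)\<^sup>2 + 7 * (norm hB)\<^sup>2 \<le> 3 * (norm hS * norm hB)"
    using abs_ge_minus_self[of "mat_inner k M hS hR"] abs_ge_minus_self[of "mat_inner k M hB hR"]
    by linarith
  then have "norm hS = 0" by (rule quadratic_bound_eq_0)
  then show ?thesis by (simp add: hS_def)
qed

lemma null_space_property:
  fixes h :: "real ^ 'm::finite"
  assumes rip: "satisfies_rip k M s (3/10)" and TD: "T \<inter> D = {}" and card: "card T + 2 * card D \<le> s"
    and ker: "\<forall>i<k. mat_vec M h i = 0" and "h \<noteq> 0"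
  shows "(\<Sum>i\<in>D. \<bar>h $ i\<bar>) < (\<Sum>i\<in>-(T \<union> D). \<bar>h $ i\<bar>)"
proof (rule ccontr)
  define S where "S = T \<union> D"
  assume "\<not> ?thesis"
  then have cone: "(\<Sum>i\<in>-S. \<bar>h $ i\<bar>) \<le> (\<Sum>i\<in>D. \<bar>h $ i\<bar>)" by (simp add: S_def)
  have "vec_restrict h S = 0 \<and> (\<Sum>i\<in>D. \<bar>h $ i\<bar>) = 0"
  proof (cases "D = {}")
    case True
    then have "(\<Sum>i\<in>-S. \<bar>h $ i\<bar>) = 0" using cone by (simp add: antisym sum_nonneg)
    then have "supp h \<subseteq> T" using True by (auto simp: S_def supp_def sum_nonneg_eq_0_iff)
    then have "h = 0" using card by (intro kernel_sparse_eq_0[OF rip _ ker] card_supp_le_of_subset) auto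
    then show ?thesis using True by (simp add: vec_restrict_eq_0_iff)
  next
    case False
    have "(\<Sum>i\<in>D. \<bar>h $ i\<bar>) \<le> sqrt (card D) * norm (vec_restrict h D)"
      by (rule sum_abs_le_sqrt_card_mult_norm)
    also have "\<dots> \<le> sqrt (card D) * norm (vec_restrict h S)"
      by (intro mult_left_mono norm_vec_restrict_mono) (auto simp: S_def)
    finally have "vec_restrict h S = 0"
      using cone card TD False
      by (intro kernel_vec_restrict_eq_0[OF rip ker, of "card D"]) (auto simp: S_def card_Un_disjoint)
    moreover have "D \<subseteq> S" by (simp add: S_def)
    ultimately show ?thesis by (auto simp: vec_restrict_eq_0_iff intro!: sum.neutral)
  qed
  then have "\<forall>i\<in>S. h $ i = 0" "(\<Sum>i\<in>-S. \<bar>h $ i\<bar>) = 0"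
    using cone by (auto simp: vec_restrict_eq_0_iff intro: antisym sum_nonneg)
  then have "\<forall>i\<in>S. h $ i = 0" "\<forall>i\<in>-S. h $ i = 0" by (simp_all add: sum_nonneg_eq_0_iff)
  then have "h = 0" by (metis ComplI vec_eq_iff zero_index)
  with \<open>h \<noteq> 0\<close> show False ..
qed

lemma modcs_sol_eq_of_rip:
  assumes rip: "satisfies_rip k M s (3/10)" and TD: "T \<inter> D = {}" and card: "card T + 2 * card D \<le> s"
    and supp: "supp x \<subseteq> T \<union> D" and sol: "is_modcs_sol k M T x b"
  shows "b = x"
proof (rule ccontr)
  define h where "h = b - x"
  assume "b \<noteq> x"
  then have "h \<noteq> 0" by (simp add: h_def)
  moreover have "\<forall>i<k. mat_vec M h i = 0"
    using sol by (simp add: is_modcs_sol_def feasible_def h_def mat_vec_diff)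
  ultimately have nsp: "(\<Sum>i\<in>D. \<bar>h $ i\<bar>) < (\<Sum>i\<in>-(T \<union> D). \<bar>h $ i\<bar>)"
    using null_space_property[OF rip TD card] by blast
  have split: "-T = D \<union> -(T \<union> D)" "D \<inter> -(T \<union> D) = {}" using TD by auto
  have x0: "\<forall>i\<in>-(T \<union> D). x $ i = 0" using supp by (auto simp: supp_def)
  have "l1_off T x = (\<Sum>i\<in>D. \<bar>x $ i\<bar>)"
    unfolding l1_off_def split(1) using split(2) x0 by (simp add: sum.union_disjoint)
  also have "\<dots> < (\<Sum>i\<in>D. \<bar>x $ i + h $ i\<bar>) + (\<Sum>i\<in>-(T \<union> D). \<bar>h $ i\<bar>)"
  proof -
    have "(\<Sum>i\<in>D. \<bar>x $ i\<bar>) \<le> (\<Sum>i\<in>D. \<bar>x $ i + h $ i\<bar>) + (\<Sum>i\<in>D. \<bar>h $ i\<bar>)"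
      unfolding sum.distrib[symmetric] by (intro sum_mono) linarith
    then show ?thesis using nsp by linarith
  qed
  also have "\<dots> = l1_off T b"
    unfolding l1_off_def split(1) using split(2) x0 by (simp add: sum.union_disjoint h_def)
  finally have "l1_off T x < l1_off T b" .
  moreover have "feasible k M x x" by (simp add: feasible_def)
  then have "l1_off T b \<le> l1_off T x" using sol by (simp add: is_modcs_sol_def)
  ultimately show False by simp
qed

lemma modcs_sol_eq:
  assumes "ric k M (card (supp x) + card (supp x - T) + card (T - supp x)) < 3/10"
    and "is_modcs_sol k M T x b"
  shows "b = x"
proof (rule modcs_sol_eq_of_rip[OF satisfies_rip_of_ric_less[OF assms(1)] _ _ _ assms(2)])
  show "T \<inter> (supp x - T) = {}" "supp x \<subseteq> T \<union> (supp x - T)" by auto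
  have "card T = card (T \<inter> supp x) + card (T - supp x)"
    "card (supp x) = card (T \<inter> supp x) + card (supp x - T)"
    using card_Int_Diff[of T "supp x"] card_Int_Diff[of "supp x" T] by (simp_all add: Int_commute)
  then show "card T + 2 * card (supp x - T)
      \<le> card (supp x) + card (supp x - T) + card (T - supp x)" by linarith
qed

theorem mainTheorem1:
  fixes x :: "nat \<Rightarrow> real ^ 'm"
    and n :: "nat \<Rightarrow> nat"
    and A :: "nat \<Rightarrow> nat \<Rightarrow> 'm \<Rightarrow> real"
    and xhat :: "nat \<Rightarrow> real ^ 'm"
  assumes ric0: "ric (n 0) (A 0) (2 * card (supp (x 0))) \<le> 0.2"
    and ricT: "\<And>t. t > 0 \<Longrightarrow>
        ric (n t) (A t) (card (supp (x t)) + card (supp (x t) - supp (x (t - 1)))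
                         + card (supp (x (t - 1)) - supp (x t))) \<le> 0.2"
    and sol0: "is_modcs_sol (n 0) (A 0) {} (x 0) (xhat 0)"
    and solT: "\<And>t. t > 0 \<Longrightarrow> is_modcs_sol (n t) (A t) (supp (xhat (t - 1))) (x t) (xhat t)"
  shows "\<forall>t. xhat t = x t \<and>
     (\<forall>b. is_modcs_sol (n t) (A t) (if t = 0 then {} else supp (xhat (t - 1))) (x t) b \<longrightarrow> b = x t)"
proof -
  have unique: "b = x t"
    if "is_modcs_sol (n t) (A t) (if t = 0 then {} else supp (x (t - 1))) (x t) b" for t b
  proof (cases "t = 0")
    case True
    then show ?thesis using that ric0 by (intro modcs_sol_eq[where T = "{}"]) (auto simp: mult_2)
  next
    case False
    then show ?thesis using that ricT[of t] by (intro modcs_sol_eq) auto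
  qed
  have xhat: "xhat t = x t" for t
  proof (induction t)
    case 0
    show ?case using unique[of 0] sol0 by simp
  next
    case (Suc t)
    then show ?case using unique[of "Suc t"] solT[of "Suc t"] by simp
  qed
  show ?thesis using unique xhat by metis
qed

end
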